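(* Let $k\ge2$ be an integer. For every online 1-bounded space $k$-cardinality constrained algorithm $ALG$ and every integer $m\ge3$, there exists an item sequence $I$ such that $OPT_k(I)=m$ and: (A) if $k=2$, $ALG(I)\ge2\cdot OPT_k(I)-2$; (B) if $k\ge3$, $ALG(I)\ge\left(3-\frac2k\right)\cdot OPT_k(I)-5+\frac5k$.
   Context: The $k$-cardinality constrained bin packing problem: an item sequence $I=(a_1,\dots,a_n)\in(0,1]^n$ must be packed into bins of capacity $1$ with at most $k$ items per bin; $OPT_k(I)$ is the minimum number of non-empty bins, $ALG(I)$ the number used by $ALG$. A $k$-cardinality constrained algorithm always outputs packings with at most $k$ items per bin. An online algorithm processes the items in the given order, irrevocably packing each item into a bin before seeing any later item. A bin is open if it contains an item and may still receive items; closed bins never receive further items. A 1-bounded space algorithm keeps at most one open bin at any time, so each item goes either into the most recently opened bin or into a new bin. *)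

theory Defs
  imports Complex_Main
begin

text \<open>A deterministic online 1-bounded space algorithm is modelled by its decision
function A: given the items seen so far (the prefix pre) and the current item x,
A pre x = True means "close the current open bin (if any) and put x into a new bin",
A pre x = False means "put x into the current open bin".  Since the algorithm is
deterministic, its earlier decisions are determined by the prefix, so this captures
all online 1-bounded space algorithms.  The state is
(number of bins used, load of the open bin, number of items in the open bin).\<close>

type_synonym online_alg = "real list \<Rightarrow> real \<Rightarrow> bool"

primrec pack_run :: "online_alg \<Rightarrow> real list \<Rightarrow> real list \<Rightarrow> nat \<times> real \<times> nat \<Rightarrow> nat \<times> real \<times> nat" where
  "pack_run A pre [] s = s"
| "pack_run A pre (x # xs) s =
     (case s of (b, l, c) \<Rightarrow>
        if 0 < b \<and> \<not> A pre x
        then pack_run A (pre @ [x]) xs (b, l + x, Suc c)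
        else pack_run A (pre @ [x]) xs (Suc b, x, 1))"

definition run :: "online_alg \<Rightarrow> real list \<Rightarrow> nat \<times> real \<times> nat" where
  "run A xs = pack_run A [] xs (0, 0, 0)"

definition ALG :: "online_alg \<Rightarrow> real list \<Rightarrow> nat" where
  "ALG A I = fst (run A I)"

definition valid_items :: "real list \<Rightarrow> bool" where
  "valid_items I \<longleftrightarrow> (\<forall>x\<in>set I. 0 < x \<and> x \<le> 1)"

definition valid_alg :: "nat \<Rightarrow> online_alg \<Rightarrow> bool" where
  "valid_alg k A \<longleftrightarrow>
     (\<forall>pre x. valid_items (pre @ [x]) \<longrightarrow>
        (case run A pre of (b, l, c) \<Rightarrow>
           (0 < b \<and> \<not> A pre x) \<longrightarrow> l + x \<le> 1 \<and> c < k))"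

definition feasible_packing :: "nat \<Rightarrow> real list \<Rightarrow> nat \<Rightarrow> bool" where
  "feasible_packing k I m \<longleftrightarrow>
     (\<exists>f :: nat \<Rightarrow> nat. (\<forall>i<length I. f i < m) \<and>
        (\<forall>j<m. (\<Sum>i\<in>{i. i < length I \<and> f i = j}. I ! i) \<le> 1 \<and>
               card {i. i < length I \<and> f i = j} \<le> k))"

definition OPT :: "nat \<Rightarrow> real list \<Rightarrow> nat" where
  "OPT k I = (LEAST m. feasible_packing k I m)"

end

theory Submission
  imports Defs
begin

text \<open>The adversary presents \<open>m(k-2)\<close> tiny items of size \<open>\<epsilon>/k\<close>, followed by a chain of
\<open>2m-2\<close> items close to \<open>1/2\<close> in which any two consecutive items overflow a bin, where
\<open>\<epsilon> = 1/(8m)\<close>. By the cardinality constraint the tiny items occupy at least \<open>m(k-2)/k\<close> bins,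
and since the algorithm keeps a single bin open, every chain item except possibly the first
opens a new bin; hence \<open>k \<cdot> ALG \<ge> m(k-2) + k(2m-3)\<close>. Offline, bin \<open>j\<close> takes \<open>k-2\<close> tiny
items and the chain items \<open>2j-2\<close> and \<open>2j+1\<close>, of total size \<open>1-\<epsilon>\<close>, so \<open>m\<close> bins suffice;
and the chain items \<open>1, 0, 2, \<dots>, 2m-4\<close> pairwise overflow a bin, so \<open>m\<close> bins are needed.\<close>

section \<open>Runs of a 1-bounded space algorithm\<close>

lemma pack_run_append:
  "pack_run A pre (xs @ ys) s = pack_run A (pre @ xs) ys (pack_run A pre xs s)"
  by (induction xs arbitrary: pre s) (auto split: prod.split)

lemma run_Nil [simp]: "run A [] = (0, 0, 0)"
  by (simp add: run_def)

lemma run_snoc: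
  "run A (xs @ [x]) = (case run A xs of (b, l, c) \<Rightarrow>
     if 0 < b \<and> \<not> A xs x then (b, l + x, Suc c) else (Suc b, x, 1))"
  unfolding run_def pack_run_append by (simp split: prod.split)

lemma valid_items_append [simp]:
  "valid_items (xs @ ys) \<longleftrightarrow> valid_items xs \<and> valid_items ys"
  by (auto simp: valid_items_def)

lemma valid_alg_fits:
  assumes "valid_alg k A" "valid_items (xs @ [x])" "run A xs = (b, l, c)" "0 < b" "\<not> A xs x"
  shows "l + x \<le> 1" "c < k"
  using assms unfolding valid_alg_def by fastforce+

lemma run_open_bin:
  assumes "valid_items xs" "xs \<noteq> []" "run A xs = (b, l, c)"
  shows "0 < b \<and> last xs \<le> l"
  using assms
proof (induction xs arbitrary: b l c rule: rev_induct)
  case Nil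
  then show ?case by simp
next
  case (snoc x xs)
  obtain b' l' c' where r: "run A xs = (b', l', c')" by (metis prod_cases3)
  have "0 < x" using snoc.prems(1) by (simp add: valid_items_def)
  moreover have "0 \<le> l'" if "0 < b'"
  proof -
    have "xs \<noteq> []" using that r by (cases "xs = []") simp_all
    then have "last xs \<le> l'" "0 < last xs"
      using snoc.IH[OF _ _ r] snoc.prems(1) by (auto simp: valid_items_def)
    then show ?thesis by simp
  qed
  ultimately show ?case using snoc.prems(3) r by (auto simp: run_snoc split: if_splits)
qed

text \<open>The \<open>b-1\<close> closed bins hold at most \<open>k\<close> items each.\<close>

lemma run_cardinality:
  assumes "valid_alg k A" "1 \<le> k" "valid_items xs" "xs \<noteq> []" "run A xs = (b, l, c)"
  shows "c \<le> k \<and> length xs + k \<le> b * k + c"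
  using assms(3-)
proof (induction xs arbitrary: b l c rule: rev_induct)
  case Nil
  then show ?case by simp
next
  case (snoc x xs)
  obtain b' l' c' where r: "run A xs = (b', l', c')" by (metis prod_cases3)
  show ?case
  proof (cases "0 < b' \<and> \<not> A xs x")
    case True
    then have "xs \<noteq> []" using r by (cases "xs = []") simp_all
    then show ?thesis
      using snoc.IH[OF _ _ r] valid_alg_fits(2)[OF assms(1) snoc.prems(1) r] True snoc
      by (auto simp: run_snoc r)
  next
    case False
    have "length xs \<le> b' * k"
      using snoc.IH[OF _ _ r] snoc.prems(1) by (cases "xs = []") auto
    then show ?thesis using False snoc.prems(3) assms(2) by (auto simp: run_snoc r)
  qed
qed

lemma length_le_ALG_mult:
  assumes "valid_alg k A" "1 \<le> k" "valid_items xs"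
  shows "length xs \<le> ALG A xs * k"
proof -
  obtain b l c where r: "run A xs = (b, l, c)" by (metis prod_cases3)
  show ?thesis using run_cardinality[OF assms _ r] r by (cases "xs = []") (auto simp: ALG_def)
qed

lemma ALG_snoc_mono: "ALG A xs \<le> ALG A (xs @ [x])"
  by (auto simp: ALG_def run_snoc split: prod.split)

lemma ALG_snoc_new_bin:
  assumes "valid_alg k A" "valid_items (xs @ [x])" "xs = [] \<or> 1 < last xs + x"
  shows "ALG A (xs @ [x]) = Suc (ALG A xs)"
proof -
  obtain b l c where r: "run A xs = (b, l, c)" by (metis prod_cases3)
  have "\<not> (0 < b \<and> \<not> A xs x)"
  proof
    assume fits: "0 < b \<and> \<not> A xs x"
    then have "xs \<noteq> []" using r by (cases "xs = []") simp_all
    then have "last xs \<le> l" using run_open_bin[OF _ _ r] assms(2) by simp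
    then show False
      using valid_alg_fits(1)[OF assms(1,2) r] fits assms(3) \<open>xs \<noteq> []\<close> by simp
  qed
  then show ?thesis by (simp add: ALG_def run_snoc r)
qed

lemma ALG_append_overfull_chain:
  assumes "valid_alg k A" "valid_items (xs @ ys)" "successively (\<lambda>x y. 1 < x + y) ys"
  shows "ALG A xs + length ys \<le> ALG A (xs @ ys) + (if xs = [] then 0 else 1)"
  using assms(2,3)
proof (induction ys rule: rev_induct)
  case Nil
  then show ?case by simp
next
  case (snoc y ys)
  have IH: "ALG A xs + length ys \<le> ALG A (xs @ ys) + (if xs = [] then 0 else 1)"
    using snoc by (simp add: successively_append_iff)
  show ?case
  proof (cases "xs @ ys = [] \<or> 1 < last (xs @ ys) + y")
    case True
    then show ?thesis
      using IH ALG_snoc_new_bin[OF assms(1), of "xs @ ys" y] snoc.prems(1) by simp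
  next
    case False
    then have "ys = []" using snoc.prems(2) by (cases "ys = []") (auto simp: successively_append_iff)
    then show ?thesis using False ALG_snoc_mono[of A xs y] by simp
  qed
qed

lemma successively_upt:
  assumes "\<And>i. P i (Suc i)"
  shows "successively P [a..<b]"
proof (induction b)
  case (Suc b)
  consider "b < a" | "b = a" | "a < b" by linarith
  then show ?case using Suc assms[of "b - 1"] by cases (auto simp: successively_append_iff)
qed simp

section \<open>Packings\<close>

definition bin_indices :: "real list \<Rightarrow> (nat \<Rightarrow> nat) \<Rightarrow> nat \<Rightarrow> nat set" where
  "bin_indices I f j = {i. i < length I \<and> f i = j}"

definition bin_load :: "real list \<Rightarrow> (nat \<Rightarrow> nat) \<Rightarrow> nat \<Rightarrow> real" where
  "bin_load I f j = (\<Sum>i\<in>bin_indices I f j. I ! i)"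

lemma feasible_packing_iff:
  "feasible_packing k I m \<longleftrightarrow>
     (\<exists>f. (\<forall>i<length I. f i < m) \<and> (\<forall>j<m. bin_load I f j \<le> 1 \<and> card (bin_indices I f j) \<le> k))"
  by (simp add: feasible_packing_def bin_load_def bin_indices_def)

lemma finite_bin_indices [simp]: "finite (bin_indices I f j)"
  by (simp add: bin_indices_def)

lemma bin_indices_append:
  "bin_indices (xs @ ys) f j =
     bin_indices xs f j \<union> (+) (length xs) ` bin_indices ys (\<lambda>i. f (length xs + i)) j"
  (is "?lhs = ?rhs")
proof
  show "?lhs \<subseteq> ?rhs"
  proof
    fix i assume "i \<in> ?lhs"
    show "i \<in> ?rhs"
    proof (cases "i < length xs")
      case False
      then have "i = length xs + (i - length xs)"
        "i - length xs \<in> bin_indices ys (\<lambda>i. f (length xs + i)) j"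
        using \<open>i \<in> ?lhs\<close> by (auto simp: bin_indices_def)
      then show ?thesis by (metis UnI2 imageI)
    qed (use \<open>i \<in> ?lhs\<close> in \<open>auto simp: bin_indices_def\<close>)
  qed
qed (auto simp: bin_indices_def)

lemma card_bin_indices_append:
  "card (bin_indices (xs @ ys) f j) =
     card (bin_indices xs f j) + card (bin_indices ys (\<lambda>i. f (length xs + i)) j)"
  unfolding bin_indices_append
  by (subst card_Un_disjoint) (auto simp: card_image bin_indices_def)

lemma bin_load_append:
  "bin_load (xs @ ys) f j = bin_load xs f j + bin_load ys (\<lambda>i. f (length xs + i)) j"
  unfolding bin_load_def bin_indices_append
  by (subst sum.union_disjoint) (auto simp: sum.reindex bin_indices_def nth_append)

lemma bin_load_nonneg: "valid_items I \<Longrightarrow> 0 \<le> bin_load I f j"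
  unfolding bin_load_def bin_indices_def valid_items_def
  by (intro sum_nonneg) (auto intro: less_imp_le)

lemma feasible_packing_append:
  assumes "\<forall>i<length xs. f i < m" "\<forall>i<length ys. g i < m"
    and "\<forall>j<m. bin_load xs f j + bin_load ys g j \<le> 1 \<and>
                card (bin_indices xs f j) + card (bin_indices ys g j) \<le> k"
  shows "feasible_packing k (xs @ ys) m"
proof -
  define h where "h i = (if i < length xs then f i else g (i - length xs))" for i
  have shift: "(\<lambda>i. h (length xs + i)) = g" by (simp add: h_def fun_eq_iff)
  have prefix: "bin_indices xs h = bin_indices xs f" by (auto simp: h_def bin_indices_def)
  then have "bin_load xs h = bin_load xs f" by (simp add: bin_load_def fun_eq_iff)
  then have "bin_load (xs @ ys) h j = bin_load xs f j + bin_load ys g j"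
    and "card (bin_indices (xs @ ys) h j) = card (bin_indices xs f j) + card (bin_indices ys g j)"
    for j by (simp_all add: bin_load_append card_bin_indices_append shift prefix)
  moreover have "\<forall>i<length (xs @ ys). h i < m"
    using assms(1,2) by (auto simp: h_def)
  ultimately show ?thesis
    using assms(3) unfolding feasible_packing_iff by (intro exI[of _ h]) simp
qed

lemma feasible_packing_appendD:
  assumes "valid_items xs" "feasible_packing k (xs @ ys) m"
  shows "feasible_packing k ys m"
proof -
  obtain f where f: "\<forall>i<length (xs @ ys). f i < m"
    "\<forall>j<m. bin_load (xs @ ys) f j \<le> 1 \<and> card (bin_indices (xs @ ys) f j) \<le> k"
    using assms(2) unfolding feasible_packing_iff by blast
  have "bin_load ys (\<lambda>i. f (length xs + i)) j \<le> 1 \<and>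
        card (bin_indices ys (\<lambda>i. f (length xs + i)) j) \<le> k" if "j < m" for j
    using f(2)[rule_format, OF that] bin_load_nonneg[OF assms(1), of f j]
    by (simp add: bin_load_append card_bin_indices_append)
  moreover have "\<forall>i<length ys. f (length xs + i) < m" using f(1) by simp
  ultimately show ?thesis
    unfolding feasible_packing_iff by (intro exI[of _ "\<lambda>i. f (length xs + i)"]) simp
qed

lemma card_le_bins_if_pairwise_overfull:
  assumes "feasible_packing k I m" "valid_items I" "X \<subseteq> {..<length I}"
    and "pairwise (\<lambda>a b. 1 < I ! a + I ! b) X"
  shows "card X \<le> m"
proof -
  obtain f where f: "\<forall>i<length I. f i < m" "\<forall>j<m. bin_load I f j \<le> 1"
    using assms(1) unfolding feasible_packing_iff by blast
  have "inj_on f X"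
  proof (rule inj_onI, rule ccontr)
    fix a b assume ab: "a \<in> X" "b \<in> X" "f a = f b" "a \<noteq> b"
    then have "{a, b} \<subseteq> bin_indices I f (f a)"
      using assms(3) by (auto simp: bin_indices_def)
    have "I ! a + I ! b = (\<Sum>i\<in>{a, b}. I ! i)" using ab(4) by simp
    also have "\<dots> \<le> bin_load I f (f a)"
      unfolding bin_load_def using \<open>{a, b} \<subseteq> _\<close> assms(2)
      by (intro sum_mono2) (auto simp: bin_indices_def valid_items_def intro: less_imp_le)
    also have "\<dots> \<le> 1" using f ab(1) assms(3) by auto
    finally show False using assms(4) ab unfolding pairwise_def by force
  qed
  moreover have "f ` X \<subseteq> {..<m}" using f(1) assms(3) by auto
  ultimately show ?thesis using card_inj_on_le[of f X "{..<m}"] by simp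
qed

section \<open>The adversarial sequence\<close>

definition chain_eps :: "nat \<Rightarrow> real" where
  "chain_eps m = 1 / (8 * real m)"

definition chain_item :: "nat \<Rightarrow> nat \<Rightarrow> real" where
  "chain_item m p =
     (if even p then 1/2 + real (p + 2) * chain_eps m else 1/2 - real p * chain_eps m)"

definition chain_items :: "nat \<Rightarrow> real list" where
  "chain_items m = map (chain_item m) [0..<2 * m - 2]"

definition tiny_items :: "nat \<Rightarrow> nat \<Rightarrow> real list" where
  "tiny_items k m = replicate (m * (k - 2)) (chain_eps m / real k)"

definition hard_sequence :: "nat \<Rightarrow> nat \<Rightarrow> real list" where
  "hard_sequence k m = tiny_items k m @ chain_items m"

lemma chain_eps_pos: "0 < m \<Longrightarrow> 0 < chain_eps m"
  by (simp add: chain_eps_def)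

lemma chain_item_even: "even p \<Longrightarrow> chain_item m p = 1/2 + real (p + 2) * chain_eps m"
  by (simp add: chain_item_def)

lemma chain_item_odd: "odd p \<Longrightarrow> chain_item m p = 1/2 - real p * chain_eps m"
  by (simp add: chain_item_def)

lemma chain_item_pos:
  assumes "p < 4 * m"
  shows "0 < chain_item m p"
proof (cases "even p")
  case True
  have "0 \<le> real (p + 2) * chain_eps m" using chain_eps_pos[of m] assms by simp
  then show ?thesis unfolding chain_item_even[OF True] by linarith
next
  case False
  have "real p * chain_eps m < 1/2" using assms by (simp add: chain_eps_def field_simps)
  then show ?thesis unfolding chain_item_odd[OF False] by linarith
qed

lemma chain_item_le_one:
  assumes "p + 2 \<le> 4 * m"
  shows "chain_item m p \<le> 1"
proof (cases "even p")
  case True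
  have "real (p + 2) * chain_eps m \<le> 1/2" using assms by (simp add: chain_eps_def field_simps)
  then show ?thesis unfolding chain_item_even[OF True] by linarith
next
  case False
  have "0 \<le> real p * chain_eps m" using chain_eps_pos[of m] assms by simp
  then show ?thesis unfolding chain_item_odd[OF False] by linarith
qed

lemma chain_item_Suc_overfull: "0 < m \<Longrightarrow> 1 < chain_item m p + chain_item m (Suc p)"
  using chain_eps_pos[of m] by (cases "even p") (simp_all add: chain_item_def algebra_simps)

lemma successively_chain_items: "0 < m \<Longrightarrow> successively (\<lambda>x y. 1 < x + y) (chain_items m)"
  unfolding chain_items_def successively_map
  by (intro successively_upt chain_item_Suc_overfull)

lemma valid_items_chain_items: "valid_items (chain_items m)"
  by (auto simp: valid_items_def chain_items_def intro: chain_item_pos chain_item_le_one)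

lemma valid_items_hard_sequence:
  assumes "0 < m" "0 < k"
  shows "valid_items (hard_sequence k m)"
proof -
  have "chain_eps m / real k \<le> chain_eps m"
    using assms chain_eps_pos[of m] by (simp add: divide_le_eq)
  also have "\<dots> \<le> 1" using assms by (simp add: chain_eps_def)
  finally have "valid_items (tiny_items k m)"
    using assms chain_eps_pos[of m] by (simp add: tiny_items_def valid_items_def)
  then show ?thesis by (simp add: hard_sequence_def valid_items_chain_items)
qed

definition chain_bin :: "nat \<Rightarrow> nat" where
  "chain_bin p = (if even p then p div 2 + 1 else p div 2)"

lemma chain_bin_less: "p < 2 * m - 2 \<Longrightarrow> chain_bin p < m"
  by (auto simp: chain_bin_def elim!: evenE oddE)

lemma nth_chain_items: "p < 2 * m - 2 \<Longrightarrow> chain_items m ! p = chain_item m p"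
  by (simp add: chain_items_def)

lemma bin_indices_chain_bin:
  "bin_indices (chain_items m) chain_bin j \<subseteq> (if j = 0 then {1} else {2 * j - 2, 2 * j + 1})"
  by (auto simp: bin_indices_def chain_bin_def elim!: evenE oddE)

lemma card_bin_indices_chain_bin: "card (bin_indices (chain_items m) chain_bin j) \<le> 2"
proof -
  let ?Q = "if j = 0 then {1} else {2 * j - 2, 2 * j + 1}"
  have "card (bin_indices (chain_items m) chain_bin j) \<le> card ?Q"
    by (intro card_mono bin_indices_chain_bin) simp
  also have "card ?Q \<le> 2" by (simp add: card_insert_if)
  finally show ?thesis .
qed

lemma bin_load_chain_bin:
  assumes "j < m"
  shows "bin_load (chain_items m) chain_bin j \<le> 1 - chain_eps m"
proof -
  define Q where "Q = (if j = 0 then {1} else {2 * j - 2, 2 * j + 1})"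
  have "bin_load (chain_items m) chain_bin j =
        (\<Sum>p\<in>bin_indices (chain_items m) chain_bin j. chain_item m p)"
    unfolding bin_load_def by (rule sum.cong) (auto simp: bin_indices_def chain_items_def)
  also have "\<dots> \<le> (\<Sum>p\<in>Q. chain_item m p)"
  proof (rule sum_mono2)
    show "bin_indices (chain_items m) chain_bin j \<subseteq> Q"
      unfolding Q_def by (rule bin_indices_chain_bin)
    show "0 \<le> chain_item m p" if "p \<in> Q - bin_indices (chain_items m) chain_bin j" for p
      using that assms by (auto simp: Q_def split: if_splits intro!: less_imp_le chain_item_pos)
  qed (simp add: Q_def)
  also have "\<dots> \<le> 1 - chain_eps m"
  proof (cases "j = 0")
    case False
    then have "real (2 * j - 2 + 2) = 2 * real j" by simp
    then show ?thesis
      using False by (simp add: Q_def chain_item_even chain_item_odd algebra_simps)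
  qed (simp add: Q_def chain_item_odd)
  finally show ?thesis .
qed

lemma card_bin_indices_div: "card (bin_indices (replicate (m * d) a) (\<lambda>i. i div d) j) \<le> d"
proof (cases "d = 0")
  case False
  have "bin_indices (replicate (m * d) a) (\<lambda>i. i div d) j \<subseteq> (\<lambda>r. j * d + r) ` {..<d}"
  proof
    fix i assume "i \<in> bin_indices (replicate (m * d) a) (\<lambda>i. i div d) j"
    then have "i div d = j" by (simp add: bin_indices_def)
    then have "i = j * d + i mod d" using div_mult_mod_eq[of i d] by simp
    moreover have "i mod d < d" using False by simp
    ultimately show "i \<in> (\<lambda>r. j * d + r) ` {..<d}" by blast
  qed
  then have "card (bin_indices (replicate (m * d) a) (\<lambda>i. i div d) j) \<le>
             card ((\<lambda>r. j * d + r) ` {..<d})"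
    by (intro card_mono) simp_all
  also have "\<dots> \<le> d" using card_image_le[of "{..<d}" "\<lambda>r. j * d + r"] by simp
  finally show ?thesis .
qed (simp add: bin_indices_def)

lemma bin_load_replicate:
  "bin_load (replicate n a) f j = real (card (bin_indices (replicate n a) f j)) * a"
  unfolding bin_load_def by (simp add: bin_indices_def)

lemma feasible_packing_hard_sequence:
  assumes "2 \<le> k" "0 < m"
  shows "feasible_packing k (hard_sequence k m) m"
  unfolding hard_sequence_def tiny_items_def
proof (rule feasible_packing_append[where f = "\<lambda>i. i div (k - 2)" and g = chain_bin])
  show "\<forall>i<length (replicate (m * (k - 2)) (chain_eps m / real k)). i div (k - 2) < m"
    by (simp add: less_mult_imp_div_less)
  show "\<forall>i<length (chain_items m). chain_bin i < m"
    by (simp add: chain_items_def chain_bin_less)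
  let ?tiny = "replicate (m * (k - 2)) (chain_eps m / real k)"
  have "bin_load ?tiny (\<lambda>i. i div (k - 2)) j \<le> real (k - 2) * (chain_eps m / real k)" for j
    unfolding bin_load_replicate using chain_eps_pos[OF assms(2)] card_bin_indices_div
    by (intro mult_right_mono) simp_all
  also have "\<dots> \<le> chain_eps m"
    using assms chain_eps_pos[OF assms(2)] by (simp add: field_simps of_nat_diff)
  finally have tiny_load: "bin_load ?tiny (\<lambda>i. i div (k - 2)) j \<le> chain_eps m" for j .
  show "\<forall>j<m. bin_load ?tiny (\<lambda>i. i div (k - 2)) j + bin_load (chain_items m) chain_bin j \<le> 1 \<and>
      card (bin_indices ?tiny (\<lambda>i. i div (k - 2)) j) +
      card (bin_indices (chain_items m) chain_bin j) \<le> k"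
  proof (intro allI impI conjI)
    fix j assume "j < m"
    show "bin_load ?tiny (\<lambda>i. i div (k - 2)) j + bin_load (chain_items m) chain_bin j \<le> 1"
      using tiny_load[of j] bin_load_chain_bin[OF \<open>j < m\<close>] by linarith
    show "card (bin_indices ?tiny (\<lambda>i. i div (k - 2)) j) +
          card (bin_indices (chain_items m) chain_bin j) \<le> k"
      using card_bin_indices_div[of m "k - 2" "chain_eps m / real k" j]
        card_bin_indices_chain_bin[of m j] assms(1)
      by linarith
  qed
qed

lemma pairwise_overfull_chain_items:
  assumes "2 \<le> m"
  shows "pairwise (\<lambda>a b. 1 < chain_items m ! a + chain_items m ! b) (insert 1 ((*) 2 ` {..<m - 1}))"
proof (rule pairwiseI)
  let ?X = "insert 1 ((*) 2 ` {..<m - 1})"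
  have in_range: "p < 2 * m - 2" if "p \<in> ?X" "p \<noteq> 1" for p
    using that by auto
  have large: "1/2 + chain_eps m < chain_items m ! p" if "p \<in> ?X" "p \<noteq> 1" for p
  proof -
    have "even p" using that by auto
    moreover have "2 * chain_eps m \<le> real (p + 2) * chain_eps m"
      using chain_eps_pos[of m] assms by (intro mult_right_mono) simp_all
    ultimately show ?thesis
      using chain_eps_pos[of m] assms in_range[OF that]
      by (simp add: nth_chain_items chain_item_even)
  qed
  have small: "1/2 - chain_eps m \<le> chain_items m ! p" if "p \<in> ?X" for p
    using large[OF that] chain_eps_pos[of m] assms
    by (cases "p = 1") (simp_all add: nth_chain_items chain_item_odd)
  fix a b assume ab: "a \<in> ?X" "b \<in> ?X" "a \<noteq> b"
  show "1 < chain_items m ! a + chain_items m ! b"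
  proof (cases "a = 1")
    case True
    then show ?thesis using small[OF ab(1)] large[OF ab(2)] ab(3) by simp
  next
    case False
    then show ?thesis using large[OF ab(1)] small[OF ab(2)] by simp
  qed
qed

lemma bins_ge_if_feasible_packing_hard_sequence:
  assumes "2 \<le> m" "0 < k" "feasible_packing k (hard_sequence k m) n"
  shows "m \<le> n"
proof -
  let ?X = "insert 1 ((*) 2 ` {..<m - 1})"
  have "valid_items (tiny_items k m)" "valid_items (chain_items m)"
    using valid_items_hard_sequence[of m k] assms by (simp_all add: hard_sequence_def)
  moreover from this have "feasible_packing k (chain_items m) n"
    using feasible_packing_appendD assms(3) unfolding hard_sequence_def by blast
  moreover have "?X \<subseteq> {..<length (chain_items m)}"
    using assms(1) by (auto simp: chain_items_def)
  ultimately have "card ?X \<le> n"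
    using card_le_bins_if_pairwise_overfull pairwise_overfull_chain_items[OF assms(1)] by blast
  moreover have "card ?X = m"
  proof -
    have "card ((*) 2 ` {..<m - 1}) = m - 1" by (simp add: card_image inj_on_def)
    moreover have "1 \<notin> (*) 2 ` {..<m - 1}" by (auto simp: image_iff)
    ultimately show ?thesis using assms(1) by simp
  qed
  ultimately show ?thesis by simp
qed

lemma OPT_hard_sequence:
  assumes "2 \<le> k" "2 \<le> m"
  shows "OPT k (hard_sequence k m) = m"
  unfolding OPT_def
proof (rule Least_equality)
  show "feasible_packing k (hard_sequence k m) m"
    using assms by (intro feasible_packing_hard_sequence) simp_all
  have "0 < k" using assms(1) by simp
  then show "m \<le> n" if "feasible_packing k (hard_sequence k m) n" for n
    using bins_ge_if_feasible_packing_hard_sequence[OF assms(2) _ that] by blast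
qed

lemma ALG_hard_sequence:
  assumes "valid_alg k A" "2 \<le> k" "2 \<le> m"
  shows "k = 2 \<Longrightarrow> 2 * m - 2 \<le> ALG A (hard_sequence k m)"
    and "m * (k - 2) + k * (2 * m - 3) \<le> k * ALG A (hard_sequence k m)"
proof -
  have "valid_items (tiny_items k m @ chain_items m)"
    using valid_items_hard_sequence[of m k] assms by (simp add: hard_sequence_def)
  then have valid_tiny: "valid_items (tiny_items k m)"
    and chain: "ALG A (tiny_items k m) + (2 * m - 2) \<le>
                ALG A (hard_sequence k m) + (if tiny_items k m = [] then 0 else 1)"
    using ALG_append_overfull_chain[OF assms(1) _ successively_chain_items] assms(3)
    by (simp_all add: hard_sequence_def chain_items_def)
  show "k = 2 \<Longrightarrow> 2 * m - 2 \<le> ALG A (hard_sequence k m)"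
    using chain by (simp add: tiny_items_def ALG_def)
  have "ALG A (tiny_items k m) + (2 * m - 3) \<le> ALG A (hard_sequence k m)"
    using chain assms(3) by (simp split: if_splits)
  then have "k * ALG A (tiny_items k m) + k * (2 * m - 3) \<le> k * ALG A (hard_sequence k m)"
    by (metis add_mult_distrib2 mult_le_mono2)
  moreover have "m * (k - 2) \<le> ALG A (tiny_items k m) * k"
    using length_le_ALG_mult[OF assms(1) _ valid_tiny] assms(2) by (simp add: tiny_items_def)
  ultimately show "m * (k - 2) + k * (2 * m - 3) \<le> k * ALG A (hard_sequence k m)"
    by (simp add: mult.commute)
qed

theorem theorem14:
  fixes k m :: nat and A :: online_alg
  assumes "k \<ge> 2" and "valid_alg k A" and "m \<ge> 3"
  shows "\<exists>I. valid_items I \<and> OPT k I = m \<and>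
           (k = 2 \<longrightarrow> real (ALG A I) \<ge> 2 * real (OPT k I) - 2) \<and>
           (k \<ge> 3 \<longrightarrow> real (ALG A I) \<ge> (3 - 2 / real k) * real (OPT k I) - 5 + 5 / real k)"
proof (intro exI conjI impI)
  let ?I = "hard_sequence k m"
  have m: "2 \<le> m" using assms(3) by simp
  show "valid_items ?I" using assms by (intro valid_items_hard_sequence) simp_all
  show opt: "OPT k ?I = m" using OPT_hard_sequence[OF assms(1) m] .
  show "real (ALG A ?I) \<ge> 2 * real (OPT k ?I) - 2" if "k = 2"
    using ALG_hard_sequence(1)[OF assms(2,1) m that] m opt by (simp add: of_nat_diff)
  show "real (ALG A ?I) \<ge> (3 - 2 / real k) * real (OPT k ?I) - 5 + 5 / real k" if "k \<ge> 3"
  proof -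
    have "real (m * (k - 2) + k * (2 * m - 3)) \<le> real (k * ALG A ?I)"
      using ALG_hard_sequence(2)[OF assms(2,1) m] by (simp only: of_nat_le_iff)
    then have "real m * (real k - 2) + real k * (2 * real m - 3) \<le> real k * real (ALG A ?I)"
      using that m by (simp add: of_nat_diff)
    then show ?thesis using that opt by (simp add: field_simps)
  qed
qed

end
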